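(* Let $\alpha,\beta$ be relatively prime positive integers and let $s\ge2$ be an integer. If $n$ is a positive integer with $n>\beta g_{s-1}g_{s-2}$, then $s(n)\ge s$.
   Context: For positive integers $a_1,a_2$, the $(\alpha,\beta)$-walk $w_k(a_1,a_2)$ is given by $w_1=a_1$, $w_2=a_2$, $w_{k+2}=\alpha w_{k+1}+\beta w_k$ ($k\ge1$). For a positive integer $n$, $s(n;a_1,a_2)$ is the (largest) index $s$ with $w_s(a_1,a_2)=n$ ($-\infty$ if none), and $s(n)=\max_{a_1,a_2\ge1}s(n;a_1,a_2)$. The sequence $g_k$: $g_0=0$, $g_1=1$, $g_2=\alpha$, $g_{k+2}=\alpha g_{k+1}+\beta g_k$ for $k\ge1$. *)

theory Defs
  imports Main "HOL-Library.Extended_Nat"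
begin

text \<open>The (alpha,beta)-walk, indexed from 1: walk al be a1 a2 1 = a1, walk al be a1 a2 2 = a2,
  w_(k+2) = al * w_(k+1) + be * w_k. Index 0 is unused (set to 0).\<close>
fun walk :: "nat \<Rightarrow> nat \<Rightarrow> nat \<Rightarrow> nat \<Rightarrow> nat \<Rightarrow> nat" where
  "walk al be a1 a2 0 = 0"
| "walk al be a1 a2 (Suc 0) = a1"
| "walk al be a1 a2 (Suc (Suc 0)) = a2"
| "walk al be a1 a2 (Suc (Suc (Suc k))) =
     al * walk al be a1 a2 (Suc (Suc k)) + be * walk al be a1 a2 (Suc k)"

fun gseq :: "nat \<Rightarrow> nat \<Rightarrow> nat \<Rightarrow> nat" where
  "gseq al be 0 = 0"
| "gseq al be (Suc 0) = 1"
| "gseq al be (Suc (Suc k)) = al * gseq al be (Suc k) + be * gseq al be k"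

text \<open>s(n;a1,a2): largest index s \<ge> 1 with w_s = n (0 encodes -infinity, as indices are \<ge> 1).\<close>
definition s_idx :: "nat \<Rightarrow> nat \<Rightarrow> nat \<Rightarrow> nat \<Rightarrow> nat \<Rightarrow> enat" where
  "s_idx al be n a1 a2 = Sup {enat k | k. k \<ge> 1 \<and> walk al be a1 a2 k = n}"

definition s_max :: "nat \<Rightarrow> nat \<Rightarrow> nat \<Rightarrow> enat" where
  "s_max al be n = (SUP p \<in> {(a1, a2). a1 \<ge> 1 \<and> a2 \<ge> 1}. s_idx al be n (fst p) (snd p))"

end

theory Submission imports Defs "HOL-Number_Theory.Cong" begin

(* Every walk is a linear combination of two shifted copies of g:
   w_(k+2) = a2 g_(k+1) + be a1 g_k.  Since g_(k+1) and be g_k are coprime, every n exceeding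
   their product is a2 g_(k+1) + a1 (be g_k) with a1, a2 >= 1, i.e. n is the (k+2)-th term of a
   walk with positive initial values. *)

lemma walk_Suc_Suc_eq_gseq:
  "walk al be a1 a2 (Suc (Suc k)) = a2 * gseq al be (Suc k) + be * a1 * gseq al be k"
  by (induction al be k rule: gseq.induct) (simp_all add: algebra_simps)

lemma coprime_gseq_right:
  assumes "coprime al be"
  shows "coprime (gseq al be (Suc k)) be"
proof (induction k)
  case (Suc k)
  have "coprime be (al * gseq al be (Suc k))"
    using Suc assms by (simp add: coprime_commute)
  then have "coprime be (gseq al be k * be + al * gseq al be (Suc k))"
    by (simp only: coprime_iff_gcd_eq_1 gcd_add_mult)
  then show ?case by (simp add: coprime_commute ac_simps)
qed simp

lemma coprime_gseq_Suc:
  assumes "coprime al be"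
  shows "coprime (gseq al be (Suc k)) (gseq al be k)"
proof (induction k)
  case (Suc k)
  have "coprime (gseq al be (Suc k)) (be * gseq al be k)"
    using Suc coprime_gseq_right[OF assms, of k] by simp
  then have "coprime (gseq al be (Suc k)) (al * gseq al be (Suc k) + be * gseq al be k)"
    by (simp only: coprime_iff_gcd_eq_1 gcd_add_mult)
  then show ?case by (simp add: coprime_commute)
qed simp

lemma pos_combination_if_coprime:
  fixes x y n :: nat
  assumes "coprime x y" and "x * y < n"
  obtains a b where "a \<ge> 1" "b \<ge> 1" "n = a * x + b * y"
proof (cases "y = 0")
  case True
  then have "x = 1" using assms(1) by simp
  with True assms(2) show ?thesis by (intro that[of n 1]) auto
next
  case False
  obtain u where u: "[x * u = 1] (mod y)" using cong_solve_coprime_nat[OF assms(1)] by auto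
  \<comment> \<open>the representative of n/x modulo y in 1..y rather than 0..y-1\<close>
  define a where "a = (if (n * u) mod y = 0 then y else (n * u) mod y)"
  have a: "1 \<le> a" "a \<le> y" using False by (auto simp: a_def less_imp_le)
  have "[a = n * u] (mod y)" by (auto simp: a_def cong_def)
  then have "[x * a = n * (x * u)] (mod y)" by (metis cong_scalar_left mult.left_commute)
  also have "[n * (x * u) = n] (mod y)" using cong_scalar_left[OF u, of n] by simp
  finally have "[n = x * a] (mod y)" by (rule cong_sym)
  moreover have "x * a < n" using a assms(2) by (meson le_less_trans mult_le_mono2)
  ultimately obtain b where b: "n = b * y + x * a" using cong_le_nat by (meson less_imp_le)
  have "b \<ge> 1" using b \<open>x * a < n\<close> by (cases b) auto
  with a b show ?thesis by (intro that[of a b]) (auto simp: ac_simps)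
qed

lemma enat_le_s_max:
  assumes "a1 \<ge> 1" "a2 \<ge> 1" "k \<ge> 1" "walk al be a1 a2 k = n"
  shows "enat k \<le> s_max al be n"
proof -
  have "enat k \<le> s_idx al be n a1 a2"
    unfolding s_idx_def using assms by (intro Sup_upper) auto
  also have "\<dots> \<le> s_max al be n"
    unfolding s_max_def using assms by (intro SUP_upper2[of "(a1, a2)"]) auto
  finally show ?thesis .
qed

theorem lemma3p3:
  fixes al be s n :: nat
  assumes "al \<ge> 1" and "be \<ge> 1" and "coprime al be"
    and "s \<ge> 2" and "n \<ge> 1"
    and "n > be * gseq al be (s - 1) * gseq al be (s - 2)"
  shows "s_max al be n \<ge> enat s"
proof -
  obtain k where s: "s = Suc (Suc k)" using assms(4) by (metis add_2_eq_Suc le_Suc_ex)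
  let ?x = "gseq al be (Suc k)" and ?y = "be * gseq al be k"
  have "coprime ?x ?y"
    using coprime_gseq_right[OF assms(3)] coprime_gseq_Suc[OF assms(3)] by simp
  moreover have "?x * ?y < n" using assms(6) s by (simp add: ac_simps)
  ultimately obtain a2 a1 where a: "a2 \<ge> 1" "a1 \<ge> 1" "n = a2 * ?x + a1 * ?y"
    by (rule pos_combination_if_coprime)
  then have "walk al be a1 a2 s = n" by (simp add: s walk_Suc_Suc_eq_gseq ac_simps)
  then show ?thesis using a s by (intro enat_le_s_max) auto
qed

end
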